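(* Let $\Bbbk$ be a field, $n\ge 2$ an integer, $q\in\Bbbk$ a primitive $n$-th root of unity, $T_n(q)$ the Taft algebra and $A$ a unital associative $\Bbbk$-algebra. Let $\cdot:T_n(q)\otimes A\to A$ be a linear map, written $h\otimes a\mapsto h\cdot a$, and suppose $g\cdot 1_A\in\{0,1_A\}$. Then $\cdot$ is a partial action of $T_n(q)$ on $A$ if and only if either $\cdot$ is a global action, or the restriction of $\cdot$ to $\Bbbk C_n\otimes A$ (where $\Bbbk C_n=\mathrm{span}\{1,g,\dots,g^{n-1}\}$) is a partial action of the group algebra $\Bbbk C_n$ on $A$ with $g\cdot 1_A=0$ and, for all $0\le i,j<n$ and $a\in A$: (i) $g^ix^j\cdot a=q^{-ij}\sum_{k=0}^{j}(-1)^k q^{-\frac{k(k-1)}{2}}\binom{j}{k}_{q^{-1}}(x\cdot 1_A)^{j-k}(g^{i+k}\cdot a)(x\cdot 1_A)^k$; (ii) $(x\cdot 1_A)^n\in Z(A)$; (iii) $g^i\cdot(x\cdot 1_A)=q^{-i}(g^i\cdot 1_A)(x\cdot 1_A)$.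
   Context: The Taft algebra $T_n(q)$ is the Hopf algebra generated by $g,x$ with relations $g^n=1$, $x^n=0$, $xg=qgx$; it has basis $\{g^ix^j:0\le i,j<n\}$, with $\Delta(g)=g\otimes g$, $\Delta(x)=x\otimes 1+g\otimes x$, $\varepsilon(g)=1$, $\varepsilon(x)=0$, $S(g)=g^{n-1}$, $S(x)=-g^{n-1}x$; exponents of $g$ are read modulo $n$. $Z(A)$ is the center of $A$. For a bialgebra $H$ with $\Delta(h)=h_1\otimes h_2$, a partial action of $H$ on $A$ is a linear map $\cdot:H\otimes A\to A$ with (PA.1) $1_H\cdot a=a$, (PA.2) $h\cdot(ab)=(h_1\cdot a)(h_2\cdot b)$, (PA.3) $h\cdot(k\cdot a)=(h_1\cdot 1_A)(h_2k\cdot a)$ for all $h,k\in H$, $a,b\in A$. A global action is a partial action which additionally satisfies $h\cdot 1_A=\varepsilon(h)1_A$ for all $h$ (i.e. $A$ is an $H$-module algebra). $q$-binomial coefficients: for an invertible scalar $p$ and integers $N\ge0$, $m$: $\binom{0}{0}_p=1$, $\binom{N}{m}_p=0$ if $m>N$ or $m<0$, and for $N\ge1$, $0\le m\le N$, $\binom{N}{m}_p=\binom{N-1}{m-1}_p+p^m\binom{N-1}{m}_p$. *)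

theory Defs
  imports Main "HOL.Modules"
begin

fun qbinom :: "'k::field \<Rightarrow> nat \<Rightarrow> nat \<Rightarrow> 'k" where
  "qbinom p 0 m = (if m = 0 then 1 else 0)"
| "qbinom p (Suc N) m =
     (if m > Suc N then 0
      else (if m = 0 then 0 else qbinom p N (m - 1)) + p ^ m * qbinom p N m)"

definition primitive_root :: "nat \<Rightarrow> 'k::field \<Rightarrow> bool" where
  "primitive_root n q \<longleftrightarrow> q ^ n = 1 \<and> (\<forall>m. 0 < m \<and> m < n \<longrightarrow> q ^ m \<noteq> 1)"

definition algebra_over :: "('k::field \<Rightarrow> 'a::ring_1 \<Rightarrow> 'a) \<Rightarrow> bool" where
  "algebra_over sc \<longleftrightarrow> module sc \<and>
     (\<forall>c a b. sc c (a * b) = sc c a * b \<and> sc c (a * b) = a * sc c b)"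

(* A linear map T_n(q) \<otimes> A \<rightarrow> A is given by its values on the basis g^i x^j:
   act i j a = (g^i x^j) \<cdot> a, each act i j being 'k-linear (i, j < n). *)
definition taft_linear_map ::
  "('k::field \<Rightarrow> 'a::ring_1 \<Rightarrow> 'a) \<Rightarrow> nat \<Rightarrow> (nat \<Rightarrow> nat \<Rightarrow> 'a \<Rightarrow> 'a) \<Rightarrow> bool" where
  "taft_linear_map sc n act \<longleftrightarrow> (\<forall>i<n. \<forall>j<n. module_hom sc sc (act i j))"

(* Delta(g^i x^j) = sum_m [j choose m]_q g^(i+m) x^(j-m) \<otimes> g^i x^m,
   (g^i x^m)(g^r x^s) = q^(m r) g^(i+r) x^(m+s)  (= 0 if m+s \<ge> n). *)
definition taft_partial_action ::
  "('k::field \<Rightarrow> 'a::ring_1 \<Rightarrow> 'a) \<Rightarrow> nat \<Rightarrow> 'k \<Rightarrow> (nat \<Rightarrow> nat \<Rightarrow> 'a \<Rightarrow> 'a) \<Rightarrow> bool" where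
  "taft_partial_action sc n q act \<longleftrightarrow>
     (\<forall>a. act 0 0 a = a) \<and>
     (\<forall>i<n. \<forall>j<n. \<forall>a b. act i j (a * b) =
        (\<Sum>m\<le>j. sc (qbinom q j m) (act ((i + m) mod n) (j - m) a * act i m b))) \<and>
     (\<forall>i<n. \<forall>j<n. \<forall>r<n. \<forall>s<n. \<forall>a. act i j (act r s a) =
        (\<Sum>m\<le>j. sc (qbinom q j m)
            (act ((i + m) mod n) (j - m) 1 *
             (if m + s < n then sc (q ^ (m * r)) (act ((i + r) mod n) (m + s) a) else 0))))"

(* Global action: partial action with h \<cdot> 1 = \<epsilon>(h) 1 *)
definition taft_global_action ::
  "('k::field \<Rightarrow> 'a::ring_1 \<Rightarrow> 'a) \<Rightarrow> nat \<Rightarrow> 'k \<Rightarrow> (nat \<Rightarrow> nat \<Rightarrow> 'a \<Rightarrow> 'a) \<Rightarrow> bool" where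
  "taft_global_action sc n q act \<longleftrightarrow> taft_partial_action sc n q act \<and>
     (\<forall>i<n. \<forall>j<n. act i j 1 = (if j = 0 then 1 else 0))"

(* Partial action of the group algebra k C_n (basis g^i, Delta(g) = g \<otimes> g),
   given by gact i a = g^i \<cdot> a *)
definition group_partial_action :: "nat \<Rightarrow> (nat \<Rightarrow> 'a::ring_1 \<Rightarrow> 'a) \<Rightarrow> bool" where
  "group_partial_action n gact \<longleftrightarrow>
     (\<forall>a. gact 0 a = a) \<and>
     (\<forall>i<n. \<forall>a b. gact i (a * b) = gact i a * gact i b) \<and>
     (\<forall>i<n. \<forall>r<n. \<forall>a. gact i (gact r a) = gact i 1 * gact ((i + r) mod n) a)"

end

theory Submission
  imports Defs "HOL.Vector_Spaces"
begin

(* Put y = x . 1.  If g . 1 = 1, then (PA.2) and (PA.3) force x^j . 1 = 0 for j > 0 and the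
   action is global.  If g . 1 = 0, then (PA.3) with h = g^(n-1) x yields the recursion
     g^i x^(t+1) . a = q^(-i) (y (g^i x^t . a) - (g^(i+1) x^t . a) y),
   whose solution is the closed formula (i): a q-analogue of expanding (L_y - R_y)^t, with
   L_y, R_y left and right multiplication by y.  As q is a primitive n-th root of unity, the
   q-binomial coefficients [n, k] vanish for 0 < k < n, so the recursion at t = n - 1, where
   x^n = 0, says precisely that y^n is central.  Conversely, (i)-(iii) give the recursion for
   all t, and (PA.2), (PA.3) follow by induction on the x-degree from a twisted Leibniz rule
   and the q-Pascal identity. *)

lemma qbinom_eq_0: "N < m \<Longrightarrow> qbinom p N m = 0"
  by (induction N arbitrary: m) auto

lemma qbinom_0_right [simp]: "qbinom p N 0 = 1"
  by (induction N) auto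

lemma qbinom_diag [simp]: "qbinom p N N = 1"
  by (induction N) (auto simp: qbinom_eq_0)

lemma qbinom_Suc:
  "qbinom p (Suc N) m = (if m = 0 then 0 else qbinom p N (m - 1)) + p ^ m * qbinom p N m"
  by (auto simp: qbinom_eq_0)

declare qbinom.simps(2) [simp del]

lemma qbinom_Suc':
  "qbinom p (Suc N) m = qbinom p N m + (if m = 0 then 0 else p ^ (Suc N - m) * qbinom p N (m - 1))"
proof (induction N arbitrary: m)
  case 0
  then show ?case by (cases m) (auto simp: qbinom_eq_0)
next
  case (Suc N)
  note IH = Suc.IH
  show ?case
  proof (cases m)
    case 0
    then show ?thesis by simp
  next
    case (Suc k)
    have powers: "p ^ Suc k * (p ^ (N - k) * qbinom p N k) = p ^ (Suc N - k) * (p ^ k * qbinom p N k)"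
      by (cases "k \<le> N") (simp_all add: qbinom_eq_0 mult.assoc[symmetric] flip: power_add)
    have "qbinom p (Suc (Suc N)) m = qbinom p (Suc N) k + p ^ Suc k * qbinom p (Suc N) (Suc k)"
      using qbinom_Suc[of p "Suc N" m] Suc by simp
    also have "\<dots> = qbinom p N k + (if k = 0 then 0 else p ^ (Suc N - k) * qbinom p N (k - 1))
        + p ^ Suc k * qbinom p N (Suc k) + p ^ Suc k * (p ^ (N - k) * qbinom p N k)"
      using IH[of k] IH[of "Suc k"] by (simp add: algebra_simps)
    also have "\<dots> = (qbinom p N k + p ^ Suc k * qbinom p N (Suc k))
        + p ^ (Suc N - k) * ((if k = 0 then 0 else qbinom p N (k - 1)) + p ^ k * qbinom p N k)"
      using powers by (cases "k = 0") (simp_all add: algebra_simps)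
    also have "\<dots> = qbinom p (Suc N) m + p ^ (Suc (Suc N) - m) * qbinom p (Suc N) (m - 1)"
      using qbinom_Suc[of p N "Suc k"] qbinom_Suc[of p N k] Suc by simp
    finally show ?thesis using Suc by simp
  qed
qed

lemma qbinom_primitive_root_eq_0:
  fixes p :: "'k::field"
  assumes root: "primitive_root n p" and "0 < k" "k < n"
  shows "qbinom p n k = 0"
  using assms(2,3)
proof (induction k)
  case 0
  then show ?case by simp
next
  case (Suc k)
  have "(1 - p ^ Suc k) * qbinom p n (Suc k) = (1 - p ^ (n - k)) * qbinom p n k"
    using qbinom_Suc[of p n "Suc k"] qbinom_Suc'[of p n "Suc k"] by (simp add: algebra_simps)
  also have "\<dots> = 0"
    using Suc root by (cases k) (auto simp: primitive_root_def)
  finally show ?case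
    using Suc.prems root by (auto simp: primitive_root_def)
qed

lemma primitive_root_power_triangular:
  fixes p :: "'k::field"
  assumes root: "primitive_root n p" and "0 < n"
  shows "p ^ (n * (n - 1) div 2) = (-1) ^ (n - 1)"
proof (cases "even n")
  case True
  then obtain h where h: "n = 2 * h" by blast
  have "(p ^ h) ^ 2 = 1"
    using root h by (simp add: primitive_root_def power_even_eq)
  moreover have "p ^ h \<noteq> 1"
    using root h \<open>0 < n\<close> by (simp add: primitive_root_def)
  ultimately have "p ^ h = -1" by (simp add: power2_eq_1_iff)
  then show ?thesis by (simp add: h power_mult)
next
  case False
  then have "even (n - 1)" using \<open>0 < n\<close> by simp
  then obtain h where h: "n - 1 = 2 * h" by blast
  then have "n * (n - 1) div 2 = n * h" by simp
  then show ?thesis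
    using root h by (simp add: primitive_root_def power_mult)
qed

definition signed_qbinom :: "'k::field \<Rightarrow> nat \<Rightarrow> nat \<Rightarrow> 'k" where
  "signed_qbinom p t k = (-1) ^ k * p ^ (k * (k - 1) div 2) * qbinom p t k"

lemma signed_qbinom_0_right [simp]: "signed_qbinom p t 0 = 1"
  by (simp add: signed_qbinom_def)

lemma signed_qbinom_eq_0: "t < k \<Longrightarrow> signed_qbinom p t k = 0"
  by (simp add: signed_qbinom_def qbinom_eq_0)

lemma signed_qbinom_Suc:
  "signed_qbinom p (Suc t) k =
     signed_qbinom p t k - (if k = 0 then 0 else p ^ t * signed_qbinom p t (k - 1))"
proof (cases k)
  case 0
  then show ?thesis by simp
next
  case (Suc j)
  have triangular: "Suc j * j div 2 = j * (j - 1) div 2 + j"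
    by (cases j) simp_all
  have "p ^ t * (p ^ (j * (j - 1) div 2) * qbinom p t j)
      = p ^ (Suc j * j div 2) * (p ^ (t - j) * qbinom p t j)"
  proof (cases "j \<le> t")
    case True
    then have "t + j * (j - 1) div 2 = Suc j * j div 2 + (t - j)"
      using triangular by linarith
    then show ?thesis by (metis power_add mult.assoc)
  qed (simp add: qbinom_eq_0)
  then show ?thesis
    using Suc by (simp add: signed_qbinom_def qbinom_Suc' algebra_simps)
qed

lemma signed_qbinom_primitive_root_eq_0:
  "primitive_root n p \<Longrightarrow> 0 < k \<Longrightarrow> k < n \<Longrightarrow> signed_qbinom p n k = 0"
  by (simp add: signed_qbinom_def qbinom_primitive_root_eq_0)

lemma signed_qbinom_primitive_root_top:
  assumes "primitive_root n p" and "0 < n"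
  shows "signed_qbinom p n n = -1"
proof -
  obtain m where "n = Suc m" using \<open>0 < n\<close> by (metis gr0_implies_Suc)
  then show ?thesis
    using primitive_root_power_triangular[OF assms] by (simp add: signed_qbinom_def)
qed

lemma sum_atMost_ends:
  fixes f :: "nat \<Rightarrow> 'b::comm_monoid_add"
  assumes "0 < N" and "\<And>k. 0 < k \<Longrightarrow> k < N \<Longrightarrow> f k = 0"
  shows "(\<Sum>k\<le>N. f k) = f 0 + f N"
proof -
  have "(\<Sum>k\<le>N. f k) = (\<Sum>k\<in>{0, N}. f k)"
    by (rule sum.mono_neutral_right) (use assms in auto)
  then show ?thesis using assms by simp
qed

lemma power_mod_eq_power: "(c::'a::monoid_mult) ^ n = 1 \<Longrightarrow> c ^ (k mod n) = c ^ k"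
  by (metis mult_div_mod_eq power_add power_mult power_one mult_1_left)

locale taft_map =
  fixes sc :: "'k::field \<Rightarrow> 'a::ring_1 \<Rightarrow> 'a" and n :: nat and q :: 'k
    and act :: "nat \<Rightarrow> nat \<Rightarrow> 'a \<Rightarrow> 'a"
  assumes algebra: "algebra_over sc" and two_le_n: "2 \<le> n" and primitive: "primitive_root n q"
    and linear: "taft_linear_map sc n act"
begin

sublocale vector_space sc
  using algebra by (simp add: algebra_over_def module_def vector_space_def)

lemma scale_mult_left [simp]: "sc c a * b = sc c (a * b)"
  using algebra by (simp add: algebra_over_def)

lemma scale_mult_right [simp]: "a * sc c b = sc c (a * b)"
  using algebra by (simp add: algebra_over_def)

lemma act_hom: "i < n \<Longrightarrow> j < n \<Longrightarrow> module_hom sc sc (act i j)"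
  using linear by (simp add: taft_linear_map_def)

lemma act_scale: "i < n \<Longrightarrow> j < n \<Longrightarrow> act i j (sc c a) = sc c (act i j a)"
  using act_hom module_hom.scale by blast

lemma act_zero: "i < n \<Longrightarrow> j < n \<Longrightarrow> act i j 0 = 0"
  using act_hom module_hom.zero by blast

lemma act_diff: "i < n \<Longrightarrow> j < n \<Longrightarrow> act i j (a - b) = act i j a - act i j b"
  using act_hom module_hom.diff by blast

lemma n_pos: "0 < n" and one_less_n: "1 < n"
  using two_le_n by simp_all

definition p :: 'k where "p = inverse q"

lemma q_nonzero: "q \<noteq> 0"
  using primitive n_pos by (auto simp: primitive_root_def power_0_left)

lemma p_nonzero [simp]: "p \<noteq> 0"
  using q_nonzero by (simp add: p_def)

lemma p_power_q_power [simp]: "p ^ k * q ^ k = 1" and q_power_p_power [simp]: "q ^ k * p ^ k = 1"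
  using q_nonzero by (simp_all add: p_def power_inverse field_simps)

lemma primitive_p: "primitive_root n p"
  using primitive by (simp add: p_def primitive_root_def power_inverse)

lemma p_power_mod [simp]: "p ^ (k mod n) = p ^ k"
  using primitive_p power_mod_eq_power by (auto simp: primitive_root_def)

definition y :: 'a where "y = act 0 1 1"

definition g_act :: "nat \<Rightarrow> 'a \<Rightarrow> 'a" where "g_act i a = act (i mod n) 0 a"

definition expansion_sum :: "nat \<Rightarrow> nat \<Rightarrow> 'a \<Rightarrow> 'a" where
  "expansion_sum i t a = (\<Sum>k\<le>t. sc (signed_qbinom p t k) (y ^ (t - k) * g_act (i + k) a * y ^ k))"

definition expansion :: "nat \<Rightarrow> nat \<Rightarrow> 'a \<Rightarrow> 'a" where
  "expansion i t a = sc (p ^ (i * t)) (expansion_sum i t a)"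

lemma expansion_sum_Suc:
  "expansion_sum i (Suc t) a = y * expansion_sum i t a - sc (p ^ t) (expansion_sum (Suc i) t a * y)"
proof -
  define T where "T k = y ^ (Suc t - k) * g_act (i + k) a * y ^ k" for k
  have "expansion_sum i (Suc t) a
      = (\<Sum>k\<le>Suc t. sc (signed_qbinom p t k) (T k))
        - (\<Sum>k\<le>Suc t. sc (if k = 0 then 0 else p ^ t * signed_qbinom p t (k - 1)) (T k))"
    by (simp add: expansion_sum_def T_def signed_qbinom_Suc scale_left_diff_distrib sum_subtractf)
  also have "(\<Sum>k\<le>Suc t. sc (signed_qbinom p t k) (T k)) = y * expansion_sum i t a"
  proof -
    have "(\<Sum>k\<le>Suc t. sc (signed_qbinom p t k) (T k)) = (\<Sum>k\<le>t. sc (signed_qbinom p t k) (T k))"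
      by (simp add: signed_qbinom_eq_0)
    also have "\<dots> = (\<Sum>k\<le>t. y * sc (signed_qbinom p t k) (y ^ (t - k) * g_act (i + k) a * y ^ k))"
      by (intro sum.cong) (auto simp: T_def Suc_diff_le mult.assoc)
    finally show ?thesis by (simp add: expansion_sum_def sum_distrib_left)
  qed
  also have "(\<Sum>k\<le>Suc t. sc (if k = 0 then 0 else p ^ t * signed_qbinom p t (k - 1)) (T k))
      = sc (p ^ t) (expansion_sum (Suc i) t a * y)"
  proof -
    have "(\<Sum>k\<le>Suc t. sc (if k = 0 then 0 else p ^ t * signed_qbinom p t (k - 1)) (T k))
        = (\<Sum>k\<le>t. sc (p ^ t * signed_qbinom p t k) (T (Suc k)))"
      by (simp only: sum.atMost_Suc_shift) simp
    then show ?thesis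
      by (simp add: T_def expansion_sum_def sum_distrib_right scale_sum_right mult.assoc power_commutes)
  qed
  finally show ?thesis .
qed

lemma expansion_Suc:
  "expansion i (Suc t) a = sc (p ^ i) (y * expansion i t a - expansion (Suc i) t a * y)"
proof -
  have "p ^ (i * Suc t) = p ^ i * p ^ (i * t)" and "p ^ (Suc i * t) = p ^ (i * t) * p ^ t"
    by (simp_all add: power_add mult.commute)
  then show ?thesis
    by (simp add: expansion_def expansion_sum_Suc scale_right_diff_distrib mult.assoc)
qed

lemma expansion_mod [simp]: "expansion (i mod n) t a = expansion i t a"
proof -
  have "p ^ (i mod n * t) = p ^ (i * t)"
    by (metis p_power_mod power_mult)
  moreover have "g_act (i mod n + k) a = g_act (i + k) a" for k
    by (simp add: g_act_def mod_add_left_eq)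
  ultimately show ?thesis by (simp add: expansion_def expansion_sum_def)
qed

lemma expansion_0: "i < n \<Longrightarrow> expansion i 0 a = act i 0 a"
  by (simp add: expansion_def expansion_sum_def g_act_def)

lemma expansion_n: "expansion i n a = y ^ n * g_act i a - g_act i a * y ^ n"
proof -
  have "expansion_sum i n a = y ^ n * g_act (i + 0) a - g_act (i + n) a * y ^ n"
    unfolding expansion_sum_def
    by (subst sum_atMost_ends)
      (simp_all add: n_pos signed_qbinom_primitive_root_eq_0 signed_qbinom_primitive_root_top primitive_p)
  moreover have "p ^ (i * n) = 1"
    using primitive_p by (simp add: primitive_root_def power_mult mult.commute[of i])
  ultimately show ?thesis by (simp add: expansion_def g_act_def)
qed

definition closed_formula :: bool where
  "closed_formula \<longleftrightarrow> (\<forall>i<n. \<forall>j<n. \<forall>a. act i j a = expansion i j a)"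

definition x_recursion :: bool where
  "x_recursion \<longleftrightarrow> (\<forall>i<n. \<forall>t. Suc t < n \<longrightarrow>
     (\<forall>a. act i (Suc t) a = sc (p ^ i) (y * act i t a - act (Suc i mod n) t a * y)))"

lemma closed_formula_iff_x_recursion: "closed_formula \<longleftrightarrow> x_recursion"
proof
  assume closed: closed_formula
  show x_recursion
    unfolding x_recursion_def
  proof (intro allI impI)
    fix i t a assume i: "i < n" and t: "Suc t < n"
    have "act i (Suc t) a = expansion i (Suc t) a"
      using closed i t by (simp add: closed_formula_def)
    also have "\<dots> = sc (p ^ i) (y * expansion i t a - expansion (Suc i mod n) t a * y)"
      by (simp add: expansion_Suc)
    also have "expansion i t a = act i t a"
      using closed i t by (simp add: closed_formula_def)
    also have "expansion (Suc i mod n) t a = act (Suc i mod n) t a"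
      using closed t n_pos by (simp add: closed_formula_def)
    finally show "act i (Suc t) a = sc (p ^ i) (y * act i t a - act (Suc i mod n) t a * y)" .
  qed
next
  assume recursion: x_recursion
  have "\<forall>i<n. \<forall>a. act i j a = expansion i j a" if "j < n" for j
    using that
  proof (induction j)
    case 0
    then show ?case by (simp add: expansion_0)
  next
    case (Suc t)
    show ?case
    proof (intro allI impI)
      fix i a assume i: "i < n"
      have "act i (Suc t) a = sc (p ^ i) (y * act i t a - act (Suc i mod n) t a * y)"
        using recursion i Suc.prems by (simp add: x_recursion_def)
      also have "act i t a = expansion i t a"
        using Suc i by simp
      also have "act (Suc i mod n) t a = expansion (Suc i) t a"
        using Suc n_pos by simp
      finally show "act i (Suc t) a = expansion i (Suc t) a"
        by (simp add: expansion_Suc)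
    qed
  qed
  then show closed_formula
    by (simp add: closed_formula_def)
qed

context
  assumes partial: "taft_partial_action sc n q act"
begin

lemma pa_unit [simp]: "act 0 0 a = a"
  using partial by (simp add: taft_partial_action_def)

lemma pa_mult:
  "i < n \<Longrightarrow> j < n \<Longrightarrow>
     act i j (a * b) = (\<Sum>m\<le>j. sc (qbinom q j m) (act ((i + m) mod n) (j - m) a * act i m b))"
  using partial by (simp add: taft_partial_action_def)

lemma pa_comp:
  "i < n \<Longrightarrow> j < n \<Longrightarrow> r < n \<Longrightarrow> s < n \<Longrightarrow>
     act i j (act r s a) =
       (\<Sum>m\<le>j. sc (qbinom q j m) (act ((i + m) mod n) (j - m) 1 *
          (if m + s < n then sc (q ^ (m * r)) (act ((i + r) mod n) (m + s) a) else 0)))"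
  using partial by (simp add: taft_partial_action_def)

lemma pa_mult_g: "i < n \<Longrightarrow> act i 0 (a * b) = act i 0 a * act i 0 b"
  using pa_mult[of i 0 a b] n_pos by simp

lemma pa_mult_x:
  "i < n \<Longrightarrow> act i 1 (a * b) = act i 1 a * act i 0 b + act (Suc i mod n) 0 a * act i 1 b"
  using pa_mult[of i 1 a b] one_less_n by (simp add: add.commute)

lemma pa_comp_g:
  "i < n \<Longrightarrow> r < n \<Longrightarrow> s < n \<Longrightarrow> act i 0 (act r s a) = act i 0 1 * act ((i + r) mod n) s a"
  using pa_comp[of i 0 r s a] n_pos by simp

lemma pa_comp_x:
  "i < n \<Longrightarrow> r < n \<Longrightarrow> s < n \<Longrightarrow>
     act i 1 (act r s a) = act i 1 1 * act ((i + r) mod n) s a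
       + act (Suc i mod n) 0 1 * (if Suc s < n then sc (q ^ r) (act ((i + r) mod n) (Suc s) a) else 0)"
  using pa_comp[of i 1 r s a] one_less_n by (simp add: add.commute)

lemma group_partial_action_g: "group_partial_action n (\<lambda>i. act i 0)"
  unfolding group_partial_action_def using pa_mult_g pa_comp_g n_pos by auto

context
  assumes g_one: "act 1 0 1 = 1"
begin

lemma act_g_power_one: "k < n \<Longrightarrow> act k 0 1 = 1"
proof (induction k)
  case 0
  then show ?case by simp
next
  case (Suc k)
  have "act 1 0 (act k 0 1) = act 1 0 1 * act ((1 + k) mod n) 0 1"
    using pa_comp_g[of 1 k 0 1] Suc.prems one_less_n by simp
  then show ?case
    using Suc g_one by simp
qed

lemma y_eq_0: "y = 0"
proof -
  have "act 0 1 (1 * 1) = act 0 1 1 * act 0 0 1 + act (Suc 0 mod n) 0 1 * act 0 1 1"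
    using pa_mult_x[of 0 1 1] n_pos by simp
  then have "y = y + y"
    using g_one one_less_n by (simp add: y_def)
  then show "y = 0" by simp
qed

lemma act_x_power_one: "0 < j \<Longrightarrow> j < n \<Longrightarrow> act 0 j 1 = 0"
proof (induction j)
  case 0
  then show ?case by simp
next
  case (Suc j)
  show ?case
  proof (cases "j = 0")
    case True
    then show ?thesis using y_eq_0 by (simp add: y_def)
  next
    case False
    have "act 0 1 (act 0 j 1) = act 0 1 1 * act 0 j 1 + act 1 0 1 * act 0 (Suc j) 1"
      using pa_comp_x[of 0 0 j 1] Suc.prems one_less_n by simp
    then show ?thesis
      using Suc False g_one one_less_n act_zero[of 0 1] by simp
  qed
qed

lemma global_action_if_g_one: "taft_global_action sc n q act"
proof -
  have "act i j 1 = (if j = 0 then 1 else 0)" if "i < n" "j < n" for i j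
  proof (cases "j = 0")
    case True
    then show ?thesis using act_g_power_one that by simp
  next
    case False
    have "act i 0 (act 0 j 1) = act i 0 1 * act i j 1"
      using pa_comp_g[of i 0 j 1] that n_pos by simp
    then show ?thesis
      using act_x_power_one[of j] act_g_power_one[of i] act_zero[of i 0] False that n_pos by simp
  qed
  then show ?thesis
    using partial by (simp add: taft_global_action_def)
qed

end

context
  assumes g_zero: "act 1 0 1 = 0"
begin

lemma act_g_inv_one: "act (n - 1) 0 1 = 0"
proof -
  have "act (n - 1) 0 (act 1 0 1) = act (n - 1) 0 1 * act 0 0 1"
    using pa_comp_g[of "n - 1" 1 0 1] one_less_n by simp
  then show ?thesis
    using g_zero act_zero[of "n - 1" 0] n_pos by simp
qed

lemma act_g_inv_x_one: "act (n - 1) 1 1 = - sc q y"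
proof -
  have "act (n - 1) 1 (act 1 0 1) = act (n - 1) 1 1 * act 0 0 1 + act 0 0 1 * sc q (act 0 1 1)"
    using pa_comp_x[of "n - 1" 1 0 1] one_less_n by simp
  then show ?thesis
    using g_zero act_zero[of "n - 1" 1] one_less_n by (simp add: y_def eq_neg_iff_add_eq_0)
qed

lemma act_g_inv_x: "act (n - 1) 1 b = - sc q (b * y)"
proof -
  have "act (n - 1) 1 (b * 1) = act (n - 1) 1 b * act (n - 1) 0 1 + act 0 0 b * act (n - 1) 1 1"
    using pa_mult_x[of "n - 1" b 1] n_pos by simp
  then show ?thesis
    using act_g_inv_one act_g_inv_x_one by simp
qed

(* (PA.3) for h = g^(n-1) x and k = g^(i+1) x^t *)
lemma x_recursion_holds: x_recursion
  unfolding x_recursion_def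
proof (intro allI impI)
  fix i t a assume i: "i < n" and t: "Suc t < n"
  define r where "r = Suc i mod n"
  have r: "r < n" and "(n - 1 + r) mod n = i"
    using i n_pos by (auto simp: r_def mod_Suc)
  then have "act (n - 1) 1 (act r t a)
      = act (n - 1) 1 1 * act i t a + act 0 0 1 * sc (q ^ r) (act i (Suc t) a)"
    using pa_comp_x[of "n - 1" r t a] t n_pos by simp
  then have "sc (q ^ r) (act i (Suc t) a) = sc q (y * act i t a - act r t a * y)"
    unfolding act_g_inv_x act_g_inv_x_one pa_unit by (simp add: scale_right_diff_distrib algebra_simps)
  then have "act i (Suc t) a = sc (p ^ r * q) (y * act i t a - act r t a * y)"
    by (metis p_power_q_power scale_one scale_scale)
  moreover have "p ^ r * q = p ^ i"
  proof -
    have "p ^ r = p * p ^ i" by (simp add: r_def)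
    then show ?thesis using q_nonzero by (simp add: p_def)
  qed
  ultimately show "act i (Suc t) a = sc (p ^ i) (y * act i t a - act (Suc i mod n) t a * y)"
    by (simp add: r_def)
qed

lemma closed_formula_holds: closed_formula
  using x_recursion_holds closed_formula_iff_x_recursion by blast

(* (PA.3) for h = g^i and k = g^(n-i) x, applied to 1 *)
lemma act_g_y: "i < n \<Longrightarrow> act i 0 y = sc (p ^ i) (act i 0 1 * y)"
proof (cases "i = 0")
  case True
  then show ?thesis by simp
next
  case False
  assume i: "i < n"
  define k where "k = n - i"
  have k: "0 < k" "k < n" "i + k = n"
    using i False by (auto simp: k_def)
  have "(i + Suc k mod n) mod n = Suc n mod n"
    using k by (simp add: mod_add_right_eq)
  then have k_succ: "(i + Suc k mod n) mod n = 1"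
    using one_less_n by (simp add: mod_Suc)
  have "act i 0 1 * y = act i 0 (act k 1 1)"
    using pa_comp_g[of i k 1 1] i k one_less_n by (simp add: y_def)
  also have "act k 1 1 = sc (p ^ k) (y * act k 0 1 - act (Suc k mod n) 0 1 * y)"
    using x_recursion_holds k one_less_n by (simp add: x_recursion_def)
  also have "act i 0 \<dots>
      = sc (p ^ k) (act i 0 y * act i 0 (act k 0 1) - act i 0 (act (Suc k mod n) 0 1) * act i 0 y)"
    using i n_pos by (simp add: act_scale act_diff pa_mult_g)
  also have "act i 0 (act k 0 1) = act i 0 1"
    using pa_comp_g[of i k 0 1] i k by simp
  also have "act i 0 (act (Suc k mod n) 0 1) = 0"
    using pa_comp_g[of i "Suc k mod n" 0 1] i k_succ n_pos g_zero by simp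
  also have "act i 0 y * act i 0 1 = act i 0 y"
    using pa_mult_g[of i y 1] i by simp
  finally have "sc (p ^ i) (act i 0 1 * y) = sc (p ^ i * p ^ k) (act i 0 y)"
    by simp
  also have "p ^ i * p ^ k = 1"
    using primitive_p i by (simp add: k_def primitive_root_def flip: power_add)
  finally show ?thesis by simp
qed

lemma y_power_n_central: "y ^ n * b = b * y ^ n"
proof -
  have "act (n - 1) 1 (act 1 (n - 1) b) = act (n - 1) 1 1 * act 0 (n - 1) b"
    using pa_comp_x[of "n - 1" 1 "n - 1" b] one_less_n by simp
  then have top: "y * act 0 (n - 1) b - act 1 (n - 1) b * y = 0"
    unfolding act_g_inv_x act_g_inv_x_one using q_nonzero by simp
  have "y ^ n * g_act 0 b - g_act 0 b * y ^ n = expansion 0 (Suc (n - 1)) b"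
    using n_pos by (simp add: expansion_n)
  also have "\<dots> = y * expansion 0 (n - 1) b - expansion 1 (n - 1) b * y"
    by (simp add: expansion_Suc)
  also have "\<dots> = 0"
    using closed_formula_holds top one_less_n by (simp add: closed_formula_def)
  finally show ?thesis
    by (simp add: g_act_def)
qed

end

end

lemma twisted_leibniz:
  assumes "y * W - W' * y = sc (q ^ (i + m)) X" and "y * Z - Z' * y = sc (q ^ i) Y"
  shows "sc (p ^ i) (y * W * Z - W' * Z' * y) = sc (q ^ m) (X * Z) + W' * Y"
proof -
  have "y * W * Z - W' * Z' * y = (y * W - W' * y) * Z + W' * (y * Z - Z' * y)"
    by (simp add: algebra_simps)
  also have "\<dots> = sc (q ^ i) (sc (q ^ m) (X * Z) + W' * Y)"
    using assms by (simp add: power_add scale_right_distrib mult.commute)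
  finally show ?thesis by simp
qed

lemma qbinom_pascal_sum:
  "(\<Sum>m\<le>j. sc (qbinom q j m) (sc (q ^ m) (X m))) + (\<Sum>m\<le>j. sc (qbinom q j m) (X (Suc m)))
   = (\<Sum>m\<le>Suc j. sc (qbinom q (Suc j) m) (X m))"
proof -
  have "(\<Sum>m\<le>Suc j. sc (qbinom q (Suc j) m) (X m))
     = (\<Sum>m\<le>Suc j. sc (q ^ m * qbinom q j m) (X m))
       + (\<Sum>m\<le>Suc j. sc (if m = 0 then 0 else qbinom q j (m - 1)) (X m))"
    by (simp add: qbinom_Suc scale_left_distrib sum.distrib add.commute)
  also have "(\<Sum>m\<le>Suc j. sc (q ^ m * qbinom q j m) (X m))
      = (\<Sum>m\<le>j. sc (qbinom q j m) (sc (q ^ m) (X m)))"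
    by (simp add: qbinom_eq_0 mult.commute)
  also have "(\<Sum>m\<le>Suc j. sc (if m = 0 then 0 else qbinom q j (m - 1)) (X m))
      = (\<Sum>m\<le>j. sc (qbinom q j m) (X (Suc m)))"
    by (simp only: sum.atMost_Suc_shift) simp
  finally show ?thesis by simp
qed

(* The action of g^i x^t for all i and t, using g^n = 1 and x^n = 0. *)
definition act_ext :: "nat \<Rightarrow> nat \<Rightarrow> 'a \<Rightarrow> 'a" where
  "act_ext i t a = (if t < n then act (i mod n) t a else 0)"

lemma act_ext_scale: "act_ext i t (sc c a) = sc c (act_ext i t a)"
  using n_pos by (simp add: act_ext_def act_scale)

lemma act_ext_diff: "act_ext i t (a - b) = act_ext i t a - act_ext i t b"
  using n_pos by (simp add: act_ext_def act_diff)

context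
  assumes group: "group_partial_action n (\<lambda>i. act i 0)"
    and closed: closed_formula
    and central: "\<forall>b. y ^ n * b = b * y ^ n"
    and g_y: "\<forall>i<n. act i 0 y = sc (p ^ i) (act i 0 1 * y)"
begin

(* The recursion at t = n - 1, whose left-hand side g^i x^n . a vanishes; this is where (ii) enters. *)
lemma x_recursion_top: "i < n \<Longrightarrow> y * act i (n - 1) a = act (Suc i mod n) (n - 1) a * y"
proof -
  assume i: "i < n"
  have "0 = expansion i (Suc (n - 1)) a"
    using central n_pos by (simp add: expansion_n)
  also have "\<dots> = sc (p ^ i) (y * expansion i (n - 1) a - expansion (Suc i mod n) (n - 1) a * y)"
    by (simp add: expansion_Suc)
  also have "\<dots> = sc (p ^ i) (y * act i (n - 1) a - act (Suc i mod n) (n - 1) a * y)"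
    using closed i n_pos by (simp add: closed_formula_def)
  finally show ?thesis by simp
qed

lemma act_ext_Suc: "act_ext i (Suc t) a = sc (p ^ i) (y * act_ext i t a - act_ext (Suc i) t a * y)"
proof (cases "Suc t < n")
  case True
  then show ?thesis
    using closed n_pos closed_formula_iff_x_recursion
    by (auto simp: x_recursion_def act_ext_def mod_Suc_eq)
next
  case False
  then show ?thesis
    using x_recursion_top[of "i mod n" a] n_pos
    by (cases "Suc t = n") (auto simp: act_ext_def mod_Suc_eq)
qed

lemma act_ext_commutator: "y * act_ext k t a - act_ext (Suc k) t a * y = sc (q ^ k) (act_ext k (Suc t) a)"
  by (simp add: act_ext_Suc)

lemma act_ext_g_mult: "act_ext i 0 (a * b) = act_ext i 0 a * act_ext i 0 b"
  using group n_pos by (simp add: act_ext_def group_partial_action_def)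

lemma act_ext_g_y: "act_ext i 0 y = sc (p ^ i) (act_ext i 0 1 * y)"
  using g_y n_pos by (simp add: act_ext_def)

lemma act_ext_mult:
  "act_ext i j (a * b) = (\<Sum>m\<le>j. sc (qbinom q j m) (act_ext (i + m) (j - m) a * act_ext i m b))"
proof (induction j arbitrary: i)
  case 0
  then show ?case by (simp add: act_ext_g_mult)
next
  case (Suc j)
  define X where "X m = act_ext (i + m) (Suc j - m) a * act_ext i m b" for m
  have "act_ext i (Suc j) (a * b)
      = sc (p ^ i) (y * act_ext i j (a * b) - act_ext (Suc i) j (a * b) * y)"
    by (rule act_ext_Suc)
  also have "\<dots> = (\<Sum>m\<le>j. sc (qbinom q j m) (sc (p ^ i)
      (y * act_ext (i + m) (j - m) a * act_ext i m b
       - act_ext (Suc (i + m)) (j - m) a * act_ext (Suc i) m b * y)))"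
    by (simp add: Suc.IH sum_distrib_left sum_distrib_right scale_sum_right sum_subtractf
        scale_right_diff_distrib mult.assoc mult.commute[of "p ^ i"])
  also have "\<dots> = (\<Sum>m\<le>j. sc (qbinom q j m) (sc (q ^ m) (X m) + X (Suc m)))"
  proof (rule sum.cong)
    fix m assume "m \<in> {..j}"
    then have "Suc (j - m) = Suc j - m" by simp
    then show "sc (qbinom q j m) (sc (p ^ i) (y * act_ext (i + m) (j - m) a * act_ext i m b
        - act_ext (Suc (i + m)) (j - m) a * act_ext (Suc i) m b * y))
      = sc (qbinom q j m) (sc (q ^ m) (X m) + X (Suc m))"
      using twisted_leibniz[OF act_ext_commutator act_ext_commutator] by (simp add: X_def)
  qed simp
  also have "\<dots> = (\<Sum>m\<le>Suc j. sc (qbinom q (Suc j) m) (X m))"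
    by (simp only: scale_right_distrib sum.distrib qbinom_pascal_sum)
  finally show ?case by (simp add: X_def)
qed

lemma act_ext_g_mult_one: "act_ext i 0 a * act_ext i 0 1 = act_ext i 0 a"
  using act_ext_g_mult[of i a 1] by simp

lemma act_ext_g_one_y: "act_ext i 0 1 * y * act_ext i 0 1 = act_ext i 0 1 * y"
  using act_ext_g_mult_one[of i y] by (simp add: act_ext_g_y)

lemma act_ext_g_comp: "act_ext i 0 (act_ext r s a) = act_ext i 0 1 * act_ext (i + r) s a"
proof (induction s arbitrary: r)
  case 0
  have "act (i mod n) 0 (act (r mod n) 0 a) = act (i mod n) 0 1 * act ((i mod n + r mod n) mod n) 0 a"
    using group n_pos by (simp add: group_partial_action_def)
  then show ?case
    using n_pos by (simp add: act_ext_def mod_add_eq)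
next
  case (Suc s)
  define e where "e = act_ext i 0 1"
  have "act_ext i 0 (act_ext r (Suc s) a)
      = sc (p ^ r) (act_ext i 0 y * act_ext i 0 (act_ext r s a)
          - act_ext i 0 (act_ext (Suc r) s a) * act_ext i 0 y)"
    by (simp add: act_ext_Suc act_ext_scale act_ext_diff act_ext_g_mult)
  also have "act_ext i 0 y * act_ext i 0 (act_ext r s a) = sc (p ^ i) (e * y * act_ext (i + r) s a)"
    using act_ext_g_one_y[of i] by (simp add: Suc.IH act_ext_g_y e_def mult.assoc[symmetric])
  also have "act_ext i 0 (act_ext (Suc r) s a) * act_ext i 0 y
      = sc (p ^ i) (act_ext i 0 (act_ext (Suc r) s a) * y)"
    using act_ext_g_mult_one[of i "act_ext (Suc r) s a"] by (simp add: act_ext_g_y flip: mult.assoc)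
  also have "\<dots> = sc (p ^ i) (e * act_ext (Suc (i + r)) s a * y)"
    by (simp add: Suc.IH e_def)
  also have "sc (p ^ r) (sc (p ^ i) (e * y * act_ext (i + r) s a)
        - sc (p ^ i) (e * act_ext (Suc (i + r)) s a * y))
      = e * act_ext (i + r) (Suc s) a"
    by (simp add: act_ext_Suc scale_right_diff_distrib right_diff_distrib power_add mult.assoc mult.commute)
  finally show ?case by (simp add: e_def)
qed

lemma act_ext_comp:
  "act_ext i j (act_ext r s a) =
     (\<Sum>m\<le>j. sc (qbinom q j m) (act_ext (i + m) (j - m) 1 * sc (q ^ (m * r)) (act_ext (i + r) (m + s) a)))"
proof (induction j arbitrary: i)
  case 0
  then show ?case by (simp add: act_ext_g_comp)
next
  case (Suc j)
  define X where "X m = act_ext (i + m) (Suc j - m) 1 * sc (q ^ (m * r)) (act_ext (i + r) (m + s) a)" for m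
  have "act_ext i (Suc j) (act_ext r s a)
      = sc (p ^ i) (y * act_ext i j (act_ext r s a) - act_ext (Suc i) j (act_ext r s a) * y)"
    by (rule act_ext_Suc)
  also have "\<dots> = (\<Sum>m\<le>j. sc (qbinom q j m) (sc (p ^ i)
      (y * act_ext (i + m) (j - m) 1 * sc (q ^ (m * r)) (act_ext (i + r) (m + s) a)
       - act_ext (Suc (i + m)) (j - m) 1 * sc (q ^ (m * r)) (act_ext (Suc (i + r)) (m + s) a) * y)))"
    by (simp add: Suc.IH sum_distrib_left sum_distrib_right scale_sum_right sum_subtractf
        scale_right_diff_distrib mult.assoc mult.commute[of "p ^ i"])
  also have "\<dots> = (\<Sum>m\<le>j. sc (qbinom q j m) (sc (q ^ m) (X m) + X (Suc m)))"
  proof (rule sum.cong)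
    fix m assume "m \<in> {..j}"
    have commutator: "y * sc (q ^ (m * r)) (act_ext (i + r) (m + s) a)
        - sc (q ^ (m * r)) (act_ext (Suc (i + r)) (m + s) a) * y
      = sc (q ^ i) (sc (q ^ (Suc m * r)) (act_ext (i + r) (Suc m + s) a))"
      by (simp add: act_ext_commutator flip: scale_right_diff_distrib) (simp add: power_add algebra_simps)
    have "sc (p ^ i) (y * act_ext (i + m) (j - m) 1 * sc (q ^ (m * r)) (act_ext (i + r) (m + s) a)
         - act_ext (Suc (i + m)) (j - m) 1 * sc (q ^ (m * r)) (act_ext (Suc (i + r)) (m + s) a) * y)
      = sc (q ^ m) (act_ext (i + m) (Suc (j - m)) 1 * sc (q ^ (m * r)) (act_ext (i + r) (m + s) a))
        + act_ext (Suc (i + m)) (j - m) 1 * sc (q ^ (Suc m * r)) (act_ext (i + r) (Suc m + s) a)"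
      by (rule twisted_leibniz[OF act_ext_commutator commutator])
    also have "Suc (j - m) = Suc j - m"
      using \<open>m \<in> {..j}\<close> by simp
    finally show "sc (qbinom q j m) (sc (p ^ i)
        (y * act_ext (i + m) (j - m) 1 * sc (q ^ (m * r)) (act_ext (i + r) (m + s) a)
         - act_ext (Suc (i + m)) (j - m) 1 * sc (q ^ (m * r)) (act_ext (Suc (i + r)) (m + s) a) * y))
      = sc (qbinom q j m) (sc (q ^ m) (X m) + X (Suc m))"
      by (simp add: X_def)
  qed simp
  also have "\<dots> = (\<Sum>m\<le>Suc j. sc (qbinom q (Suc j) m) (X m))"
    by (simp only: scale_right_distrib sum.distrib qbinom_pascal_sum)
  finally show ?case by (simp add: X_def)
qed

lemma partial_action_if_conditions: "taft_partial_action sc n q act"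
  unfolding taft_partial_action_def
proof (intro conjI allI impI)
  fix a
  show "act 0 0 a = a"
    using group by (simp add: group_partial_action_def)
next
  fix i j a b assume i: "i < n" and j: "j < n"
  have "act i j (a * b) = act_ext i j (a * b)"
    using i j by (simp add: act_ext_def)
  also have "\<dots> = (\<Sum>m\<le>j. sc (qbinom q j m) (act_ext (i + m) (j - m) a * act_ext i m b))"
    by (rule act_ext_mult)
  also have "\<dots> = (\<Sum>m\<le>j. sc (qbinom q j m) (act ((i + m) mod n) (j - m) a * act i m b))"
    by (rule sum.cong) (use i j in \<open>auto simp: act_ext_def\<close>)
  finally show "act i j (a * b) = \<dots>" .
next
  fix i j r s a assume i: "i < n" and j: "j < n" and "r < n" "s < n"
  then have "act i j (act r s a) = act_ext i j (act_ext r s a)"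
    by (simp add: act_ext_def)
  also have "\<dots> = (\<Sum>m\<le>j. sc (qbinom q j m)
      (act_ext (i + m) (j - m) 1 * sc (q ^ (m * r)) (act_ext (i + r) (m + s) a)))"
    by (rule act_ext_comp)
  also have "\<dots> = (\<Sum>m\<le>j. sc (qbinom q j m) (act ((i + m) mod n) (j - m) 1 *
      (if m + s < n then sc (q ^ (m * r)) (act ((i + r) mod n) (m + s) a) else 0)))"
    by (rule sum.cong) (use i j in \<open>auto simp: act_ext_def\<close>)
  finally show "act i j (act r s a) = \<dots>" .
qed

end

theorem partial_action_iff:
  assumes "act 1 0 1 = 0 \<or> act 1 0 1 = 1"
  shows "taft_partial_action sc n q act \<longleftrightarrow>
    taft_global_action sc n q act \<or>
    (group_partial_action n (\<lambda>i. act i 0) \<and> act 1 0 1 = 0 \<and> closed_formula \<and>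
     (\<forall>b. y ^ n * b = b * y ^ n) \<and> (\<forall>i<n. act i 0 y = sc (p ^ i) (act i 0 1 * y)))"
proof
  assume partial: "taft_partial_action sc n q act"
  show "taft_global_action sc n q act \<or>
    (group_partial_action n (\<lambda>i. act i 0) \<and> act 1 0 1 = 0 \<and> closed_formula \<and>
     (\<forall>b. y ^ n * b = b * y ^ n) \<and> (\<forall>i<n. act i 0 y = sc (p ^ i) (act i 0 1 * y)))"
    using assms global_action_if_g_one[OF partial] group_partial_action_g[OF partial]
      closed_formula_holds[OF partial] y_power_n_central[OF partial] act_g_y[OF partial]
    by blast
qed (auto simp: taft_global_action_def intro: partial_action_if_conditions)

end

theorem theorem3p9:
  fixes sc :: "'k::field \<Rightarrow> 'a::ring_1 \<Rightarrow> 'a"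
    and n :: nat and q :: 'k
    and act :: "nat \<Rightarrow> nat \<Rightarrow> 'a \<Rightarrow> 'a"
  assumes "algebra_over sc"
    and "n \<ge> 2"
    and "primitive_root n q"
    and "taft_linear_map sc n act"
    and "act 1 0 1 = 0 \<or> act 1 0 1 = 1"
  shows "taft_partial_action sc n q act \<longleftrightarrow>
    (taft_global_action sc n q act \<or>
     (group_partial_action n (\<lambda>i. act i 0) \<and> act 1 0 1 = 0 \<and>
      (\<forall>i<n. \<forall>j<n. \<forall>a. act i j a =
         sc (inverse q ^ (i * j))
           (\<Sum>k\<le>j. sc ((-1) ^ k * inverse q ^ (k * (k - 1) div 2) * qbinom (inverse q) j k)
              (act 0 1 1 ^ (j - k) * act ((i + k) mod n) 0 a * act 0 1 1 ^ k))) \<and>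
      (\<forall>b. act 0 1 1 ^ n * b = b * act 0 1 1 ^ n) \<and>
      (\<forall>i<n. act i 0 (act 0 1 1) = sc (inverse q ^ i) (act i 0 1 * act 0 1 1))))"
proof -
  interpret taft_map sc n q act
    using assms(1-4) by unfold_locales
  show ?thesis
    using partial_action_iff[OF assms(5)]
    unfolding closed_formula_def expansion_def expansion_sum_def signed_qbinom_def g_act_def p_def y_def .
qed

end
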